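(* Let $\alpha\in(0,1]$, $\lambda_\alpha=\sqrt{\log(1/\alpha)/2}$, $p_1,\dots,p_m\in[0,1]$, and consider the DKW local tests $\varphi_A=\max_{t\in[0,1]}\mathbf 1\{i_A(t)>|A|t+\sqrt{|A|}\lambda_\alpha\}$. Let $$\hat m_0=\min_{t\in[0,1)}\Big\lfloor\Big(\frac{\lambda_\alpha}{2(1-t)}+\sqrt{\frac{\lambda_\alpha^2}{4(1-t)^2}+\frac{m-i(t)}{1-t}}\Big)^2\Big\rfloor\wedge m,$$ let $\sigma$ be a permutation with $p_{\sigma(1)}\le\dots\le p_{\sigma(m)}$, $p_{(k)}=p_{\sigma(k)}$, $R_k=\{\sigma(1),\dots,\sigma(k)\}$, $\zeta_k=k\wedge\lfloor\hat m_0p_{(k)}+\sqrt{\hat m_0}\lambda_\alpha\rfloor$, and $\mathfrak R=(R_k,\zeta_k)_{1\le k\le m}$. Then $\hat V^{\mathrm{IP}}_\varphi(S)=\hat V^{\mathrm{JER}}_{\mathfrak R}(S)$ for every $S\subseteq\{1,\dots,m\}$.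
   Context: $i_A(t)=\#\{j\in A:p_j\le t\}$, $i(t)=i_{\{1,\dots,m\}}(t)$. $\hat V^{\mathrm{IP}}_\varphi(S)=\max\{|A\cap S|:A\subseteq\{1,\dots,m\},\varphi_A=0\}$. For a reference family $(R_k,\zeta_k)_{k\in\mathcal K}$: $\mathfrak A(\mathfrak R)=\{A\subseteq\{1,\dots,m\}:\forall k,|R_k\cap A|\le\zeta_k\}$ and $\hat V^{\mathrm{JER}}_{\mathfrak R}(S)=\max_{A\in\mathfrak A(\mathfrak R)}|S\cap A|$. *)

theory Defs
  imports Complex_Main
begin

text \<open>Hypotheses are indexed by {1..m}; p-values are a function p :: nat => real.\<close>

definition i_count :: "(nat \<Rightarrow> real) \<Rightarrow> nat set \<Rightarrow> real \<Rightarrow> nat" where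
  "i_count p A t = card {j \<in> A. p j \<le> t}"

definition lambda_alpha :: "real \<Rightarrow> real" where
  "lambda_alpha \<alpha> = sqrt (ln (1 / \<alpha>) / 2)"

definition dkw_test :: "real \<Rightarrow> (nat \<Rightarrow> real) \<Rightarrow> nat set \<Rightarrow> bool" where
  "dkw_test \<alpha> p A \<longleftrightarrow>
     (\<exists>t\<in>{0..1}. real (i_count p A t) > real (card A) * t + sqrt (real (card A)) * lambda_alpha \<alpha>)"

text \<open>V^IP_phi(S) = max{|A inter S| : A subset {1..m}, phi_A = 0}; phi given as predicate "phi A = 1".\<close>
definition V_IP :: "nat \<Rightarrow> (nat set \<Rightarrow> bool) \<Rightarrow> nat set \<Rightarrow> nat" where
  "V_IP m \<phi> S = Max {card (A \<inter> S) | A. A \<subseteq> {1..m} \<and> \<not> \<phi> A}"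

definition JER_sets :: "nat \<Rightarrow> 'k set \<Rightarrow> ('k \<Rightarrow> nat set) \<Rightarrow> ('k \<Rightarrow> int) \<Rightarrow> nat set set" where
  "JER_sets m K R \<zeta> = {A. A \<subseteq> {1..m} \<and> (\<forall>k\<in>K. int (card (R k \<inter> A)) \<le> \<zeta> k)}"

definition V_JER :: "nat \<Rightarrow> 'k set \<Rightarrow> ('k \<Rightarrow> nat set) \<Rightarrow> ('k \<Rightarrow> int) \<Rightarrow> nat set \<Rightarrow> nat" where
  "V_JER m K R \<zeta> S = Max {card (S \<inter> A) | A. A \<in> JER_sets m K R \<zeta>}"

text \<open>The estimator m0-hat: min over t in [0,1) of the floor expression, capped at m.
  The floored quantity is nonnegative, so it is taken in nat; the minimum is the
  least element (Inf) of the resulting nonempty set of naturals.\<close>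
definition m0_hat :: "real \<Rightarrow> nat \<Rightarrow> (nat \<Rightarrow> real) \<Rightarrow> nat" where
  "m0_hat \<alpha> m p = min m (Inf { nat \<lfloor>(lambda_alpha \<alpha> / (2 * (1 - t))
        + sqrt ((lambda_alpha \<alpha>)\<^sup>2 / (4 * (1 - t)\<^sup>2)
                + (real m - real (i_count p {1..m} t)) / (1 - t)))\<^sup>2\<rfloor> | t. 0 \<le> t \<and> t < 1 })"

end

theory Submission
  imports Defs
begin

text \<open>Any
  A \<subseteq> {1..m} misses at most m - i(t) of the p-values above t, so acceptance implies
  |A| - (m - i(t)) \<le> |A| t + sqrt |A| \<lambda>: a quadratic inequality in sqrt |A| which, for all
  t < 1 together, is equivalent to |A| \<le> m0. Evaluating the test at t = p_(k) then gives the
  JER constraints. Conversely, the constraint at k = i(t) bounds i_A(t) by m0 t + sqrt m0 \<lambda>,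
  which forces |A| \<le> m0; padding A with the largest p-values up to cardinality exactly m0
  gives an accepted superset, since at each t either no added p-value is \<le> t (the count is
  unchanged) or the padded set contains every p-value above t (and the defining inequality of
  m0 applies). So accepted and admissible sets have the same maximal intersections with S.\<close>

lemma quadratic_nonpos_iff_le_root:
  fixes u c l s :: real
  assumes "0 < u" "0 \<le> c" "0 \<le> l" "0 \<le> s"
  shows "u * s\<^sup>2 - l * s - c \<le> 0 \<longleftrightarrow> s \<le> l / (2 * u) + sqrt (l\<^sup>2 / (4 * u\<^sup>2) + c / u)"
proof -
  define r where "r = sqrt (l\<^sup>2 / (4 * u\<^sup>2) + c / u)"
  have discr_nonneg: "0 \<le> l\<^sup>2 / (4 * u\<^sup>2) + c / u"
    using assms by (intro add_nonneg_nonneg divide_nonneg_nonneg) auto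
  have r_sq: "r\<^sup>2 = l\<^sup>2 / (4 * u\<^sup>2) + c / u"
    unfolding r_def using discr_nonneg by simp
  have "l\<^sup>2 / (4 * u\<^sup>2) = (l / (2 * u))\<^sup>2" by (simp add: power_divide power_mult_distrib)
  then have "sqrt (l\<^sup>2 / (4 * u\<^sup>2)) = l / (2 * u)" using assms by simp
  moreover have "sqrt (l\<^sup>2 / (4 * u\<^sup>2)) \<le> r"
    unfolding r_def using assms by (intro real_sqrt_le_mono) simp
  ultimately have vertex_le_r: "l / (2 * u) \<le> r" by simp
  have "0 \<le> r" unfolding r_def using discr_nonneg by simp
  have "u * s\<^sup>2 - l * s - c = u * ((s - l / (2 * u))\<^sup>2 - r\<^sup>2)"
    unfolding r_sq using assms by (simp add: field_simps power2_eq_square)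
  then have "u * s\<^sup>2 - l * s - c \<le> 0 \<longleftrightarrow> (s - l / (2 * u))\<^sup>2 \<le> r\<^sup>2"
    using assms(1) by (simp add: mult_le_0_iff)
  also have "\<dots> \<longleftrightarrow> \<bar>s - l / (2 * u)\<bar> \<le> r"
    using \<open>0 \<le> r\<close> by (metis abs_le_square_iff abs_of_nonneg)
  also have "\<dots> \<longleftrightarrow> s - l / (2 * u) \<le> r"
    using vertex_le_r assms by (auto simp: abs_if)
  finally show ?thesis unfolding r_def by linarith
qed

lemma exists_card_Un_image_eq:
  fixes f :: "nat \<Rightarrow> 'a" and m n :: nat
  assumes "finite A" "card A \<le> n" "n \<le> card (A \<union> f ` {1..m})"
  shows "\<exists>l\<in>{1..m + 1}. card (A \<union> f ` {l..m}) = n"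
proof -
  define g where "g l = - int (card (A \<union> f ` {l..m}))" for l
  have "\<bar>g (Suc l) - g l\<bar> \<le> 1" if "1 \<le> l \<and> l < m + 1" for l
  proof -
    have "{l..m} = insert l {Suc l..m}" using that by auto
    then show ?thesis using assms(1) by (simp add: g_def card_insert_if)
  qed
  moreover have "g 1 \<le> - int n" "- int n \<le> g (m + 1)"
    using assms(2,3) by (simp_all add: g_def)
  ultimately obtain l where "1 \<le> l" "l \<le> m + 1" "g l = - int n"
    using nat_intermed_int_val[of 1 "m + 1" g "- int n"] by auto
  then show ?thesis unfolding g_def by auto
qed

lemma downward_closed_eq_atLeastAtMost_card:
  fixes L :: "nat set"
  assumes "L \<subseteq> {1..m}" "\<And>l q. l \<in> L \<Longrightarrow> 1 \<le> q \<Longrightarrow> q \<le> l \<Longrightarrow> q \<in> L"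
  shows "L = {1..card L}"
proof (cases "L = {}")
  case False
  define n where "n = Max L"
  have "finite L" using assms(1) finite_subset by blast
  then have "n \<in> L" using False n_def by simp
  have "L = {1..n}"
  proof
    show "L \<subseteq> {1..n}" using assms(1) \<open>finite L\<close> n_def by auto
    show "{1..n} \<subseteq> L" using assms(2) \<open>n \<in> L\<close> by auto
  qed
  then show ?thesis by simp
qed simp

lemma V_IP_eq_V_JER_if_cofinal:
  assumes accepted_admissible: "\<And>A. A \<subseteq> {1..m} \<Longrightarrow> \<not> \<phi> A \<Longrightarrow> A \<in> JER_sets m K R \<zeta>"
    and admissible_extends: "\<And>B. B \<in> JER_sets m K R \<zeta> \<Longrightarrow> \<exists>A. B \<subseteq> A \<and> A \<subseteq> {1..m} \<and> \<not> \<phi> A"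
    and "\<not> \<phi> {}"
  shows "V_IP m \<phi> S = V_JER m K R \<zeta> S"
proof -
  let ?I = "{card (A \<inter> S) | A. A \<subseteq> {1..m} \<and> \<not> \<phi> A}"
  let ?J = "{card (S \<inter> B) | B. B \<in> JER_sets m K R \<zeta>}"
  have card_le_m: "card (A \<inter> S) \<le> m" if "A \<subseteq> {1..m}" for A
    using card_mono[of "{1..m}" "A \<inter> S"] that by auto
  have "?J \<subseteq> {..m}"
  proof
    fix x assume "x \<in> ?J"
    then obtain B where "x = card (B \<inter> S)" "B \<subseteq> {1..m}"
      unfolding JER_sets_def by (auto simp: Int_commute)
    then show "x \<in> {..m}" using card_le_m by simp
  qed
  then have "finite ?J" by (rule finite_subset) simp
  have "?I \<noteq> {}" using \<open>\<not> \<phi> {}\<close> by blast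
  have "?I \<subseteq> ?J" using accepted_admissible by (auto simp: Int_commute)
  then have "finite ?I" using \<open>finite ?J\<close> by (rule finite_subset)
  have "Max ?I \<le> Max ?J" using \<open>?I \<subseteq> ?J\<close> \<open>?I \<noteq> {}\<close> \<open>finite ?J\<close> by (rule Max_mono)
  moreover have "Max ?J \<le> Max ?I"
  proof (rule Max.boundedI)
    show "finite ?J" by fact
    show "?J \<noteq> {}" using \<open>?I \<subseteq> ?J\<close> \<open>?I \<noteq> {}\<close> by blast
    fix x assume "x \<in> ?J"
    then obtain B where "x = card (S \<inter> B)" "B \<in> JER_sets m K R \<zeta>" by blast
    then obtain A where "B \<subseteq> A" "A \<subseteq> {1..m}" "\<not> \<phi> A" using admissible_extends by blast
    have "finite (A \<inter> S)" using \<open>A \<subseteq> {1..m}\<close> finite_subset by blast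
    then have "x \<le> card (A \<inter> S)"
      unfolding \<open>x = card (S \<inter> B)\<close> by (rule card_mono) (use \<open>B \<subseteq> A\<close> in blast)
    also have "\<dots> \<le> Max ?I"
      using \<open>finite ?I\<close> \<open>A \<subseteq> {1..m}\<close> \<open>\<not> \<phi> A\<close> by (intro Max_ge) blast+
    finally show "x \<le> Max ?I" .
  qed
  ultimately show ?thesis unfolding V_IP_def V_JER_def by simp
qed

definition dkw_bound :: "real \<Rightarrow> nat \<Rightarrow> real \<Rightarrow> real" where
  "dkw_bound \<alpha> n t = real n * t + sqrt (real n) * lambda_alpha \<alpha>"

lemma not_dkw_test_iff:
  "\<not> dkw_test \<alpha> p A \<longleftrightarrow> (\<forall>t\<in>{0..1}. real (i_count p A t) \<le> dkw_bound \<alpha> (card A) t)"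
  unfolding dkw_test_def dkw_bound_def by (auto simp: not_less)

lemma dkw_bound_mono:
  assumes "0 \<le> lambda_alpha \<alpha>" "n \<le> n'" "0 \<le> t"
  shows "dkw_bound \<alpha> n t \<le> dkw_bound \<alpha> n' t"
  unfolding dkw_bound_def using assms by (intro add_mono mult_right_mono) auto

lemma i_count_le_card: "finite A \<Longrightarrow> i_count p A t \<le> card A"
  unfolding i_count_def by (intro card_mono) auto

lemma card_eq_i_count_add_card_above:
  assumes "finite A"
  shows "card A = i_count p A t + card {j \<in> A. t < p j}"
proof -
  have "A = {j \<in> A. p j \<le> t} \<union> {j \<in> A. t < p j}" by auto
  then have "card A = card ({j \<in> A. p j \<le> t} \<union> {j \<in> A. t < p j})" by simp
  also have "\<dots> = i_count p A t + card {j \<in> A. t < p j}"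
    unfolding i_count_def using assms by (intro card_Un_disjoint) auto
  finally show ?thesis .
qed

lemma i_count_ge_excess:
  assumes "finite U" "A \<subseteq> U"
  shows "real (card A) - (real (card U) - real (i_count p U t)) \<le> real (i_count p A t)"
proof -
  have "card {j \<in> A. t < p j} \<le> card {j \<in> U. t < p j}"
    using assms by (intro card_mono) auto
  then show ?thesis
    using card_eq_i_count_add_card_above[of A p t] card_eq_i_count_add_card_above[of U p t]
      assms finite_subset by fastforce
qed

lemma i_count_eq_excess:
  assumes "finite U" "A \<subseteq> U" "{j \<in> U. t < p j} \<subseteq> A"
  shows "real (i_count p A t) = real (card A) - (real (card U) - real (i_count p U t))"
proof -
  have "{j \<in> A. t < p j} = {j \<in> U. t < p j}" using assms(2,3) by auto
  then show ?thesis
    using card_eq_i_count_add_card_above[of A p t] card_eq_i_count_add_card_above[of U p t]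
      assms finite_subset by fastforce
qed

text \<open>The larger root of (1 - t) s^2 - \<lambda> s - (m - i(t)) in s = sqrt n; m0_hat is the least
  floor of its square.\<close>

definition m0_root :: "real \<Rightarrow> nat \<Rightarrow> (nat \<Rightarrow> real) \<Rightarrow> real \<Rightarrow> real" where
  "m0_root \<alpha> m p t = lambda_alpha \<alpha> / (2 * (1 - t))
     + sqrt ((lambda_alpha \<alpha>)\<^sup>2 / (4 * (1 - t)\<^sup>2) + (real m - real (i_count p {1..m} t)) / (1 - t))"

lemma excess_le_dkw_bound_iff:
  assumes "0 \<le> lambda_alpha \<alpha>" "t < 1"
  shows "real n - (real m - real (i_count p {1..m} t)) \<le> dkw_bound \<alpha> n t
    \<longleftrightarrow> real n \<le> (m0_root \<alpha> m p t)\<^sup>2"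
proof -
  define s where "s = sqrt (real n)"
  have "0 \<le> s" unfolding s_def by simp
  have above_nonneg: "0 \<le> real m - real (i_count p {1..m} t)"
    using i_count_le_card[of "{1..m}" p t] by simp
  then have "0 \<le> m0_root \<alpha> m p t"
    unfolding m0_root_def using assms by (intro add_nonneg_nonneg divide_nonneg_nonneg) auto
  have "real n - (real m - real (i_count p {1..m} t)) \<le> dkw_bound \<alpha> n t
    \<longleftrightarrow> (1 - t) * s\<^sup>2 - lambda_alpha \<alpha> * s - (real m - real (i_count p {1..m} t)) \<le> 0"
    unfolding dkw_bound_def s_def by (simp add: algebra_simps)
  also have "\<dots> \<longleftrightarrow> s \<le> m0_root \<alpha> m p t"
    unfolding m0_root_def using assms above_nonneg \<open>0 \<le> s\<close>
    by (intro quadratic_nonpos_iff_le_root) auto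
  also have "\<dots> \<longleftrightarrow> s\<^sup>2 \<le> (m0_root \<alpha> m p t)\<^sup>2"
    using \<open>0 \<le> s\<close> \<open>0 \<le> m0_root \<alpha> m p t\<close> by (simp add: power_mono_iff)
  finally show ?thesis unfolding s_def by simp
qed

lemma le_m0_hat_iff:
  "n \<le> m0_hat \<alpha> m p \<longleftrightarrow> n \<le> m \<and> (\<forall>t. 0 \<le> t \<and> t < 1 \<longrightarrow> real n \<le> (m0_root \<alpha> m p t)\<^sup>2)"
proof -
  let ?F = "{nat \<lfloor>(m0_root \<alpha> m p t)\<^sup>2\<rfloor> | t. 0 \<le> t \<and> t < 1}"
  have "m0_hat \<alpha> m p = min m (Inf ?F)" unfolding m0_hat_def m0_root_def by simp
  moreover have "n \<le> Inf ?F \<longleftrightarrow> (\<forall>k\<in>?F. n \<le> k)" by (intro le_cInf_iff) auto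
  moreover have "n \<le> nat \<lfloor>x\<^sup>2\<rfloor> \<longleftrightarrow> real n \<le> x\<^sup>2" for x :: real
    by (simp add: le_nat_iff le_floor_iff)
  ultimately show ?thesis by auto
qed

lemma le_m0_hat_iff_excess:
  assumes "0 \<le> lambda_alpha \<alpha>"
  shows "n \<le> m0_hat \<alpha> m p \<longleftrightarrow> n \<le> m \<and>
    (\<forall>t. 0 \<le> t \<and> t < 1 \<longrightarrow> real n - (real m - real (i_count p {1..m} t)) \<le> dkw_bound \<alpha> n t)"
  using le_m0_hat_iff excess_le_dkw_bound_iff[OF assms] by auto

lemma card_le_m0_hat_if_not_dkw_test:
  assumes "0 \<le> lambda_alpha \<alpha>" "A \<subseteq> {1..m}" "\<not> dkw_test \<alpha> p A"
  shows "card A \<le> m0_hat \<alpha> m p"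
proof (subst le_m0_hat_iff_excess[OF assms(1)], intro conjI allI impI)
  show "card A \<le> m" using card_mono[OF _ assms(2)] by simp
  fix t :: real assume "0 \<le> t \<and> t < 1"
  then have "real (i_count p A t) \<le> dkw_bound \<alpha> (card A) t"
    using assms(3) by (auto simp: not_dkw_test_iff)
  with i_count_ge_excess[of "{1..m}" A p t] assms(2)
  show "real (card A) - (real m - real (i_count p {1..m} t)) \<le> dkw_bound \<alpha> (card A) t"
    by simp
qed

locale sorted_pvalues =
  fixes m :: nat and p :: "nat \<Rightarrow> real" and \<sigma> :: "nat \<Rightarrow> nat"
  assumes p_range: "\<forall>j\<in>{1..m}. 0 \<le> p j \<and> p j \<le> 1"
    and bij_\<sigma>: "bij_betw \<sigma> {1..m} {1..m}"
    and p_sorted: "\<forall>k l. 1 \<le> k \<and> k \<le> l \<and> l \<le> m \<longrightarrow> p (\<sigma> k) \<le> p (\<sigma> l)"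
begin

lemma image_\<sigma>: "\<sigma> ` {1..m} = {1..m}"
  using bij_\<sigma> by (simp add: bij_betw_def)

lemma image_\<sigma>_prefix_i_count: "\<sigma> ` {1..i_count p {1..m} t} = {j \<in> {1..m}. p j \<le> t}"
proof -
  define L where "L = {l \<in> {1..m}. p (\<sigma> l) \<le> t}"
  have "\<sigma> ` L = {j \<in> \<sigma> ` {1..m}. p j \<le> t}" unfolding L_def by auto
  then have image_L: "\<sigma> ` L = {j \<in> {1..m}. p j \<le> t}" unfolding image_\<sigma> .
  have "inj_on \<sigma> L"
    using bij_betw_imp_inj_on[OF bij_\<sigma>] by (rule inj_on_subset) (auto simp: L_def)
  then have "card L = i_count p {1..m} t"
    unfolding i_count_def image_L[symmetric] by (simp add: card_image)
  moreover have "L = {1..card L}"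
  proof (rule downward_closed_eq_atLeastAtMost_card)
    show "L \<subseteq> {1..m}" unfolding L_def by auto
    fix l q assume "l \<in> L" "1 \<le> q" "q \<le> l"
    then have "p (\<sigma> q) \<le> p (\<sigma> l)" using p_sorted unfolding L_def by auto
    then show "q \<in> L" using \<open>l \<in> L\<close> \<open>1 \<le> q\<close> \<open>q \<le> l\<close> unfolding L_def by auto
  qed
  ultimately show ?thesis using image_L by simp
qed

lemma above_subset_or_i_count_Un_eq:
  "{j \<in> {1..m}. t < p j} \<subseteq> \<sigma> ` {l..m} \<or> i_count p (A \<union> \<sigma> ` {l..m}) t = i_count p A t"
proof (cases "\<exists>l'\<in>{l..m}. p (\<sigma> l') \<le> t")
  case True
  then obtain l' where l': "l' \<in> {l..m}" "p (\<sigma> l') \<le> t" by blast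
  have "j \<in> \<sigma> ` {l..m}" if "j \<in> {1..m}" "t < p j" for j
  proof -
    obtain q where q: "q \<in> {1..m}" "j = \<sigma> q" using \<open>j \<in> {1..m}\<close> image_\<sigma> by blast
    have "\<not> q \<le> l'"
    proof
      assume "q \<le> l'"
      then have "p (\<sigma> q) \<le> p (\<sigma> l')" using p_sorted q l' by auto
      then show False using that q l' by simp
    qed
    then show ?thesis using q l' by auto
  qed
  then show ?thesis by blast
next
  case False
  then have "{j \<in> A \<union> \<sigma> ` {l..m}. p j \<le> t} = {j \<in> A. p j \<le> t}" by auto
  then show ?thesis unfolding i_count_def by simp
qed

end

locale dkw_reference_family = sorted_pvalues +
  fixes \<alpha> :: real
  assumes lambda_nonneg: "0 \<le> lambda_alpha \<alpha>"
begin

abbreviation m\<^sub>0 :: nat where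
  "m\<^sub>0 \<equiv> m0_hat \<alpha> m p"

abbreviation \<zeta> :: "nat \<Rightarrow> int" where
  "\<zeta> \<equiv> \<lambda>k. min (int k) \<lfloor>dkw_bound \<alpha> m\<^sub>0 (p (\<sigma> k))\<rfloor>"

abbreviation admissible :: "nat set set" where
  "admissible \<equiv> JER_sets m {1..m} (\<lambda>k. \<sigma> ` {1..k}) \<zeta>"

lemma admissible_if_not_dkw_test:
  assumes A: "A \<subseteq> {1..m}" "\<not> dkw_test \<alpha> p A"
  shows "A \<in> admissible"
proof -
  have "int (card (\<sigma> ` {1..k} \<inter> A)) \<le> \<zeta> k" if k: "k \<in> {1..m}" for k
  proof -
    have "card (\<sigma> ` {1..k} \<inter> A) \<le> card {1..k}"
      by (rule order_trans[OF card_mono card_image_le]) auto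
    have "p (\<sigma> k) \<in> {0..1}" using p_range image_\<sigma> k by auto
    have "finite A" using finite_subset[OF A(1)] by simp
    moreover have "\<sigma> ` {1..k} \<inter> A \<subseteq> {j \<in> A. p j \<le> p (\<sigma> k)}" using p_sorted k by auto
    ultimately have "card (\<sigma> ` {1..k} \<inter> A) \<le> i_count p A (p (\<sigma> k))"
      unfolding i_count_def by (simp add: card_mono)
    then have "real (card (\<sigma> ` {1..k} \<inter> A)) \<le> real (i_count p A (p (\<sigma> k)))" by simp
    also have "\<dots> \<le> dkw_bound \<alpha> (card A) (p (\<sigma> k))"
      using A(2) \<open>p (\<sigma> k) \<in> {0..1}\<close> by (simp add: not_dkw_test_iff)
    also have "\<dots> \<le> dkw_bound \<alpha> m\<^sub>0 (p (\<sigma> k))"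
      using card_le_m0_hat_if_not_dkw_test[OF lambda_nonneg A] \<open>p (\<sigma> k) \<in> {0..1}\<close>
      by (intro dkw_bound_mono[OF lambda_nonneg]) auto
    finally show ?thesis using \<open>card (\<sigma> ` {1..k} \<inter> A) \<le> card {1..k}\<close> by (simp add: le_floor_iff)
  qed
  then show ?thesis using A unfolding JER_sets_def by auto
qed

lemma i_count_le_dkw_bound_if_admissible:
  assumes A: "A \<in> admissible" and "0 \<le> t"
  shows "real (i_count p A t) \<le> dkw_bound \<alpha> m\<^sub>0 t"
proof -
  define k where "k = i_count p {1..m} t"
  have "A \<subseteq> {1..m}" and constraint: "\<And>k. k \<in> {1..m} \<Longrightarrow> int (card (\<sigma> ` {1..k} \<inter> A)) \<le> \<zeta> k"
    using A unfolding JER_sets_def by auto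
  have prefix: "\<sigma> ` {1..k} = {j \<in> {1..m}. p j \<le> t}"
    unfolding k_def by (rule image_\<sigma>_prefix_i_count)
  have "{j \<in> A. p j \<le> t} = \<sigma> ` {1..k} \<inter> A" unfolding prefix using \<open>A \<subseteq> {1..m}\<close> by auto
  then have count_eq: "i_count p A t = card (\<sigma> ` {1..k} \<inter> A)" by (simp add: i_count_def)
  show ?thesis
  proof (cases "k = 0")
    case True
    then show ?thesis
      unfolding count_eq dkw_bound_def using \<open>0 \<le> t\<close> lambda_nonneg by simp
  next
    case False
    then have k: "k \<in> {1..m}" using i_count_le_card[of "{1..m}" p t] unfolding k_def by auto
    then have "p (\<sigma> k) \<le> t" using prefix by auto
    have "real (card (\<sigma> ` {1..k} \<inter> A)) \<le> dkw_bound \<alpha> m\<^sub>0 (p (\<sigma> k))"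
      using constraint[OF k] by (simp add: le_floor_iff)
    also have "\<dots> \<le> dkw_bound \<alpha> m\<^sub>0 t"
      unfolding dkw_bound_def using \<open>p (\<sigma> k) \<le> t\<close> by (simp add: mult_left_mono)
    finally show ?thesis unfolding count_eq .
  qed
qed

lemma card_le_m0_hat_if_admissible:
  assumes A: "A \<in> admissible"
  shows "card A \<le> m\<^sub>0"
proof (rule ccontr)
  assume "\<not> card A \<le> m\<^sub>0"
  have "A \<subseteq> {1..m}" using A unfolding JER_sets_def by auto
  have "card A \<le> m\<^sub>0"
  proof (subst le_m0_hat_iff_excess[OF lambda_nonneg], intro conjI allI impI)
    show "card A \<le> m" using card_mono[OF _ \<open>A \<subseteq> {1..m}\<close>] by simp
    fix t :: real assume t: "0 \<le> t \<and> t < 1"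
    have "real (card A) - (real m - real (i_count p {1..m} t)) \<le> real (i_count p A t)"
      using i_count_ge_excess[of "{1..m}" A p t] \<open>A \<subseteq> {1..m}\<close> by simp
    also have "\<dots> \<le> dkw_bound \<alpha> m\<^sub>0 t"
      using i_count_le_dkw_bound_if_admissible[OF A] t by simp
    also have "\<dots> \<le> dkw_bound \<alpha> (card A) t"
      using \<open>\<not> card A \<le> m\<^sub>0\<close> t by (intro dkw_bound_mono[OF lambda_nonneg]) auto
    finally show "real (card A) - (real m - real (i_count p {1..m} t)) \<le> dkw_bound \<alpha> (card A) t" .
  qed
  with \<open>\<not> card A \<le> m\<^sub>0\<close> show False by simp
qed

lemma i_count_padded_le_dkw_bound:
  assumes A: "A \<in> admissible" and "1 \<le> l" and card_padded: "card (A \<union> \<sigma> ` {l..m}) = m\<^sub>0"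
    and t: "0 \<le> t" "t \<le> 1"
  shows "real (i_count p (A \<union> \<sigma> ` {l..m}) t) \<le> dkw_bound \<alpha> m\<^sub>0 t"
proof -
  let ?A' = "A \<union> \<sigma> ` {l..m}"
  have "?A' \<subseteq> {1..m}" using A \<open>1 \<le> l\<close> image_\<sigma> unfolding JER_sets_def by auto
  show ?thesis
  proof (cases "t = 1")
    case True
    then have "dkw_bound \<alpha> m\<^sub>0 t = real m\<^sub>0 + sqrt (real m\<^sub>0) * lambda_alpha \<alpha>"
      by (simp add: dkw_bound_def)
    moreover have "i_count p ?A' t \<le> m\<^sub>0"
      using i_count_le_card[of ?A' p t] finite_subset[OF \<open>?A' \<subseteq> {1..m}\<close>] card_padded by simp
    moreover have "0 \<le> sqrt (real m\<^sub>0) * lambda_alpha \<alpha>" using lambda_nonneg by simp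
    ultimately show ?thesis by linarith
  next
    case False
    consider "{j \<in> {1..m}. t < p j} \<subseteq> ?A'" | "i_count p ?A' t = i_count p A t"
      using above_subset_or_i_count_Un_eq[of t l A] by blast
    then show ?thesis
    proof cases
      case 1
      then have "real (i_count p ?A' t) = real m\<^sub>0 - (real m - real (i_count p {1..m} t))"
        using i_count_eq_excess[of "{1..m}" ?A' t p] \<open>?A' \<subseteq> {1..m}\<close> card_padded by simp
      also have "\<dots> \<le> dkw_bound \<alpha> m\<^sub>0 t"
        using le_m0_hat_iff_excess[OF lambda_nonneg, of m\<^sub>0 m p] t False by simp
      finally show ?thesis .
    next
      case 2
      then show ?thesis using i_count_le_dkw_bound_if_admissible[OF A t(1)] by simp
    qed
  qed
qed

lemma admissible_extends_to_accepted:
  assumes A: "A \<in> admissible"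
  shows "\<exists>A'. A \<subseteq> A' \<and> A' \<subseteq> {1..m} \<and> \<not> dkw_test \<alpha> p A'"
proof -
  have "A \<subseteq> {1..m}" using A unfolding JER_sets_def by auto
  then have "card (A \<union> \<sigma> ` {1..m}) = m" using image_\<sigma> by (simp add: Un_absorb1)
  then obtain l where l: "l \<in> {1..m + 1}" "card (A \<union> \<sigma> ` {l..m}) = m\<^sub>0"
    using exists_card_Un_image_eq[of A m\<^sub>0 \<sigma> m] \<open>A \<subseteq> {1..m}\<close> finite_subset
      card_le_m0_hat_if_admissible[OF A] le_m0_hat_iff by fastforce
  then have "\<not> dkw_test \<alpha> p (A \<union> \<sigma> ` {l..m})"
    using i_count_padded_le_dkw_bound[OF A] by (simp add: not_dkw_test_iff)
  moreover have "A \<union> \<sigma> ` {l..m} \<subseteq> {1..m}" using \<open>A \<subseteq> {1..m}\<close> l(1) image_\<sigma> by auto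
  ultimately show ?thesis by blast
qed

lemma V_IP_eq_V_JER: "V_IP m (dkw_test \<alpha> p) S = V_JER m {1..m} (\<lambda>k. \<sigma> ` {1..k}) \<zeta> S"
proof (rule V_IP_eq_V_JER_if_cofinal)
  show "\<not> dkw_test \<alpha> p {}" unfolding dkw_test_def i_count_def by simp
qed (use admissible_if_not_dkw_test admissible_extends_to_accepted in auto)

end

theorem mainTheorem12:
  fixes \<alpha> :: real and m :: nat and p :: "nat \<Rightarrow> real" and \<sigma> :: "nat \<Rightarrow> nat"
  assumes "0 < \<alpha>" and "\<alpha> \<le> 1"
    and "\<forall>j\<in>{1..m}. 0 \<le> p j \<and> p j \<le> 1"
    and "bij_betw \<sigma> {1..m} {1..m}"
    and "\<forall>k l. 1 \<le> k \<and> k \<le> l \<and> l \<le> m \<longrightarrow> p (\<sigma> k) \<le> p (\<sigma> l)"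
    and "S \<subseteq> {1..m}"
  shows "V_IP m (dkw_test \<alpha> p) S =
         V_JER m {1..m} (\<lambda>k. \<sigma> ` {1..k})
           (\<lambda>k. min (int k) \<lfloor>real (m0_hat \<alpha> m p) * p (\<sigma> k)
                 + sqrt (real (m0_hat \<alpha> m p)) * lambda_alpha \<alpha>\<rfloor>) S"
proof -
  interpret dkw_reference_family m p \<sigma> \<alpha>
    using assms by unfold_locales (simp_all add: lambda_alpha_def)
  show ?thesis using V_IP_eq_V_JER unfolding dkw_bound_def .
qed

end
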